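(* Let $(W,S)$ be a Coxeter system with $S$ finite, and let $\Bbbk$ be a commutative ring with no $2$-torsion. Let $(\mathfrak{h},\mathfrak{h}^*,\Delta^\vee,\Delta)$ be a realization of $(W,S)$ over $\Bbbk$, and suppose that its Cartan matrix $A=(a_{s,t})_{s,t\in S}$, $a_{s,t}=\langle \alpha_s^\vee,\alpha_t\rangle$, has determinant which is invertible in $\Bbbk$. Then $\Delta$ and $\Delta^\vee$ are each linearly independent. Moreover, as representations of $W$ one has $\mathfrak{h}\cong \Bbbk\cdot\Delta^\vee\oplus T$ for some trivial representation $T$ contained in the common kernel of all $\alpha_s$, $s\in S$; similarly $\mathfrak{h}^*\cong \Bbbk\cdot \Delta\oplus T^*$ for a trivial representation $T^*$ (contained in the common kernel of all $\alpha_s^\vee$).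
   Context: A (simple) realization of a Coxeter system $(W,S)$ over $\Bbbk$ is a free $\Bbbk$-module $\mathfrak{h}$ of finite rank together with subsets $\Delta^\vee=\{\alpha_s^\vee : s\in S\}\subset\mathfrak{h}$ (simple coroots) and $\Delta=\{\alpha_s : s\in S\}\subset \mathfrak{h}^*=\mathrm{Hom}_\Bbbk(\mathfrak{h},\Bbbk)$ (simple roots) such that $\langle\alpha_s^\vee,\alpha_s\rangle=2$ for all $s\in S$, and the assignment $s(v)=v-\langle v,\alpha_s\rangle\alpha_s^\vee$ for $v\in\mathfrak{h}$ defines a representation of $W$ on $\mathfrak{h}$. The contragredient action on $\mathfrak{h}^*$ is $s(f)=f-\langle\alpha_s^\vee,f\rangle\alpha_s$. Here $\Bbbk\cdot\Delta^\vee$ denotes the $\Bbbk$-span of $\Delta^\vee$, and similarly for $\Delta$. *)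

theory Defs
  imports "HOL-Algebra.Group" "HOL-Combinatorics.Permutations"
begin

definition word_prod :: "('g, 'b) monoid_scheme \<Rightarrow> 'g list \<Rightarrow> 'g" where
  "word_prod G w = foldr (\<lambda>x y. x \<otimes>\<^bsub>G\<^esub> y) w \<one>\<^bsub>G\<^esub>"

definition cox_move :: "('g, 'b) monoid_scheme \<Rightarrow> 'g set \<Rightarrow> 'g list \<Rightarrow> 'g list \<Rightarrow> bool" where
  "cox_move G S u v \<longleftrightarrow>
     (\<exists>a b s. s \<in> S \<and> u = a @ [s, s] @ b \<and> v = a @ b) \<or>
     (\<exists>a b s t m. s \<in> S \<and> t \<in> S \<and> 0 < (m::nat) \<and> (s \<otimes>\<^bsub>G\<^esub> t) [^]\<^bsub>G\<^esub> m = \<one>\<^bsub>G\<^esub>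
        \<and> u = a @ concat (replicate m [s, t]) @ b \<and> v = a @ b)"

definition cox_equiv :: "('g, 'b) monoid_scheme \<Rightarrow> 'g set \<Rightarrow> 'g list \<Rightarrow> 'g list \<Rightarrow> bool" where
  "cox_equiv G S = (symclp (cox_move G S))\<^sup>*\<^sup>*"

text \<open>(W,S) is a Coxeter system: S is a generating set of involutions and W has the
  presentation with generators S and relations s^2 = 1, (st)^(m_st) = 1, i.e. every
  word in S evaluating to 1 is reducible to the empty word using these relations.\<close>
definition coxeter_system :: "('g, 'b) monoid_scheme \<Rightarrow> 'g set \<Rightarrow> bool" where
  "coxeter_system G S \<longleftrightarrow> group G \<and> S \<subseteq> carrier G \<and>
     (\<forall>s\<in>S. s \<noteq> \<one>\<^bsub>G\<^esub> \<and> s \<otimes>\<^bsub>G\<^esub> s = \<one>\<^bsub>G\<^esub>) \<and>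
     carrier G = {word_prod G w | w. set w \<subseteq> S} \<and>
     (\<forall>w. set w \<subseteq> S \<longrightarrow> word_prod G w = \<one>\<^bsub>G\<^esub> \<longrightarrow> cox_equiv G S w [])"

text \<open>h is modelled as k^n: functions nat => k vanishing from index n on; h^* is
  identified with k^n via the perfect pairing below.\<close>
definition in_h :: "nat \<Rightarrow> (nat \<Rightarrow> 'k::comm_ring_1) \<Rightarrow> bool" where
  "in_h n v \<longleftrightarrow> (\<forall>i\<ge>n. v i = 0)"

definition pair :: "nat \<Rightarrow> (nat \<Rightarrow> 'k::comm_ring_1) \<Rightarrow> (nat \<Rightarrow> 'k) \<Rightarrow> 'k" where
  "pair n v f = (\<Sum>i<n. v i * f i)"

definition unitv :: "nat \<Rightarrow> nat \<Rightarrow> 'k::comm_ring_1" where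
  "unitv j = (\<lambda>i. if i = j then 1 else 0)"

definition refl_h :: "nat \<Rightarrow> (nat \<Rightarrow> 'k::comm_ring_1) \<Rightarrow> (nat \<Rightarrow> 'k) \<Rightarrow> (nat \<Rightarrow> 'k) \<Rightarrow> (nat \<Rightarrow> 'k)" where
  "refl_h n cor rt v = (\<lambda>i. v i - pair n v rt * cor i)"

definition submodule_h :: "nat \<Rightarrow> (nat \<Rightarrow> 'k::comm_ring_1) set \<Rightarrow> bool" where
  "submodule_h n T \<longleftrightarrow> (\<forall>v\<in>T. in_h n v) \<and> (\<lambda>i. 0) \<in> T \<and>
     (\<forall>v\<in>T. \<forall>w\<in>T. (\<lambda>i. v i + w i) \<in> T) \<and> (\<forall>c. \<forall>v\<in>T. (\<lambda>i. c * v i) \<in> T)"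

definition span_fam :: "'g set \<Rightarrow> ('g \<Rightarrow> nat \<Rightarrow> 'k::comm_ring_1) \<Rightarrow> (nat \<Rightarrow> 'k) set" where
  "span_fam S a = {(\<lambda>i. \<Sum>s\<in>S. c s * a s i) | c. True}"

definition lin_indep_fam :: "'g set \<Rightarrow> ('g \<Rightarrow> nat \<Rightarrow> 'k::comm_ring_1) \<Rightarrow> bool" where
  "lin_indep_fam S a \<longleftrightarrow>
     (\<forall>c. (\<lambda>i. \<Sum>s\<in>S. c s * a s i) = (\<lambda>i. 0) \<longrightarrow> (\<forall>s\<in>S. c s = 0))"

definition direct_sum_h :: "nat \<Rightarrow> (nat \<Rightarrow> 'k::comm_ring_1) set \<Rightarrow> (nat \<Rightarrow> 'k) set \<Rightarrow> bool" where
  "direct_sum_h n A T \<longleftrightarrow> A \<inter> T = {\<lambda>i. 0} \<and>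
     (\<forall>v. in_h n v \<longrightarrow> (\<exists>x\<in>A. \<exists>t\<in>T. v = (\<lambda>i. x i + t i)))"

definition is_rep :: "('g, 'b) monoid_scheme \<Rightarrow> nat \<Rightarrow> ('g \<Rightarrow> (nat \<Rightarrow> 'k::comm_ring_1) \<Rightarrow> (nat \<Rightarrow> 'k)) \<Rightarrow> bool" where
  "is_rep G n \<rho> \<longleftrightarrow>
     (\<forall>g\<in>carrier G. \<forall>v. in_h n v \<longrightarrow> in_h n (\<rho> g v)) \<and>
     (\<forall>g\<in>carrier G. \<forall>c u v. in_h n u \<longrightarrow> in_h n v \<longrightarrow>
         \<rho> g (\<lambda>i. c * u i + v i) = (\<lambda>i. c * \<rho> g u i + \<rho> g v i)) \<and>
     (\<forall>v. in_h n v \<longrightarrow> \<rho> \<one>\<^bsub>G\<^esub> v = v) \<and>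
     (\<forall>g\<in>carrier G. \<forall>h\<in>carrier G. \<forall>v. in_h n v \<longrightarrow> \<rho> (g \<otimes>\<^bsub>G\<^esub> h) v = \<rho> g (\<rho> h v))"

definition realization ::
  "('g, 'b) monoid_scheme \<Rightarrow> 'g set \<Rightarrow> nat \<Rightarrow> ('g \<Rightarrow> nat \<Rightarrow> 'k::comm_ring_1) \<Rightarrow> ('g \<Rightarrow> nat \<Rightarrow> 'k)
     \<Rightarrow> ('g \<Rightarrow> (nat \<Rightarrow> 'k) \<Rightarrow> (nat \<Rightarrow> 'k)) \<Rightarrow> bool" where
  "realization G S n cor rt \<rho> \<longleftrightarrow>
     (\<forall>s\<in>S. in_h n (cor s) \<and> in_h n (rt s) \<and> pair n (cor s) (rt s) = 2) \<and>
     is_rep G n \<rho> \<and>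
     (\<forall>s\<in>S. \<forall>v. in_h n v \<longrightarrow> \<rho> s v = refl_h n (cor s) (rt s) v)"

text \<open>Contragredient action on h^* = k^n: pair v (dual_act w f) = pair (rho (w^-1) v) f.\<close>
definition dual_act ::
  "('g, 'b) monoid_scheme \<Rightarrow> nat \<Rightarrow> ('g \<Rightarrow> (nat \<Rightarrow> 'k::comm_ring_1) \<Rightarrow> (nat \<Rightarrow> 'k)) \<Rightarrow> 'g
     \<Rightarrow> (nat \<Rightarrow> 'k) \<Rightarrow> (nat \<Rightarrow> 'k)" where
  "dual_act G n \<rho> w f = (\<lambda>j. if j < n then pair n (\<rho> (inv\<^bsub>G\<^esub> w) (unitv j)) f else 0)"

definition cartan_det :: "'g set \<Rightarrow> nat \<Rightarrow> ('g \<Rightarrow> nat \<Rightarrow> 'k::comm_ring_1) \<Rightarrow> ('g \<Rightarrow> nat \<Rightarrow> 'k) \<Rightarrow> 'k" where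
  "cartan_det S n cor rt =
     (\<Sum>p\<in>{p. p permutes S}. of_int (sign p) * (\<Prod>s\<in>S. pair n (cor s) (rt (p s))))"

end

theory Submission
  imports Defs "Jordan_Normal_Form.Determinant"
begin

text \<open>The Cartan matrix is the Gram matrix of the pairing between coroots and roots, and a unit
  determinant makes it invertible over any commutative ring. Invertibility alone gives both linear
  independences, and splits \<open>h\<close> (resp. \<open>h\<^sup>*\<close>) into the span of the coroots (resp. roots) and
  the common kernel of the roots (resp. coroots): solve for the coefficients of the projection
  with the inverse matrix. These kernels are fixed by every simple reflection, hence by all of
  \<open>W\<close>, which is generated by \<open>S\<close>.\<close>

definition invertible_on :: "'g set \<Rightarrow> ('g \<Rightarrow> 'g \<Rightarrow> 'k::comm_ring_1) \<Rightarrow> bool" where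
  "invertible_on S a \<longleftrightarrow> (\<exists>B.
     (\<forall>s\<in>S. \<forall>u\<in>S. (\<Sum>t\<in>S. a s t * B t u) = (if s = u then 1 else 0)) \<and>
     (\<forall>s\<in>S. \<forall>u\<in>S. (\<Sum>t\<in>S. B s t * a t u) = (if s = u then 1 else 0)))"

lemma invertible_on_transpose:
  assumes "invertible_on S a"
  shows "invertible_on S (\<lambda>s t. a t s)"
proof -
  obtain B where
    AB: "\<forall>s\<in>S. \<forall>u\<in>S. (\<Sum>t\<in>S. a s t * B t u) = (if s = u then 1 else 0)" and
    BA: "\<forall>s\<in>S. \<forall>u\<in>S. (\<Sum>t\<in>S. B s t * a t u) = (if s = u then 1 else 0)"
    using assms unfolding invertible_on_def by blast
  show ?thesis
    unfolding invertible_on_def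
  proof (intro exI[of _ "\<lambda>s t. B t s"] conjI ballI)
    fix s u assume "s \<in> S" "u \<in> S"
    then show "(\<Sum>t\<in>S. a t s * B u t) = (if s = u then 1 else 0)"
      and "(\<Sum>t\<in>S. B t s * a u t) = (if s = u then 1 else 0)"
      using AB BA by (auto simp: mult.commute)
  qed
qed

lemma invertible_on_kernel_trivial:
  assumes "finite S" "invertible_on S a"
    and ker: "\<forall>s\<in>S. (\<Sum>t\<in>S. a s t * c t) = 0"
  shows "\<forall>t\<in>S. c t = 0"
proof
  obtain B where BA: "\<forall>s\<in>S. \<forall>u\<in>S. (\<Sum>t\<in>S. B s t * a t u) = (if s = u then 1 else 0)"
    using assms(2) unfolding invertible_on_def by blast
  fix u assume u: "u \<in> S"
  have "c u = (\<Sum>t\<in>S. (if u = t then 1 else 0) * c t)"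
    using u assms(1) by (simp add: if_distrib[where f = "\<lambda>x. x * _"] sum.delta cong: if_cong)
  also have "\<dots> = (\<Sum>t\<in>S. (\<Sum>s\<in>S. B u s * a s t) * c t)"
    using BA u by (intro sum.cong) auto
  also have "\<dots> = (\<Sum>s\<in>S. B u s * (\<Sum>t\<in>S. a s t * c t))"
    by (simp add: sum_distrib_left sum_distrib_right mult.assoc, rule sum.swap)
  also have "\<dots> = 0" using ker by simp
  finally show "c u = 0" .
qed

lemma invertible_on_solvable:
  assumes "finite S" "invertible_on S a"
  shows "\<exists>c. \<forall>s\<in>S. (\<Sum>t\<in>S. a s t * c t) = b s"
proof -
  obtain B where AB: "\<forall>s\<in>S. \<forall>u\<in>S. (\<Sum>t\<in>S. a s t * B t u) = (if s = u then 1 else 0)"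
    using assms(2) unfolding invertible_on_def by blast
  have "(\<Sum>t\<in>S. a s t * (\<Sum>u\<in>S. B t u * b u)) = b s" if s: "s \<in> S" for s
  proof -
    have "(\<Sum>t\<in>S. a s t * (\<Sum>u\<in>S. B t u * b u)) = (\<Sum>u\<in>S. (\<Sum>t\<in>S. a s t * B t u) * b u)"
      by (simp add: sum_distrib_left sum_distrib_right mult.assoc, rule sum.swap)
    also have "\<dots> = (\<Sum>u\<in>S. (if s = u then 1 else 0) * b u)"
      using AB s by (intro sum.cong) auto
    also have "\<dots> = b s"
      using s assms(1) by (simp add: if_distrib[where f = "\<lambda>x. x * _"] sum.delta cong: if_cong)
    finally show ?thesis .
  qed
  then show ?thesis by (intro exI[of _ "\<lambda>t. \<Sum>u\<in>S. B t u * b u"]) blast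
qed

lemma leibniz_det_reindex:
  fixes a :: "'g \<Rightarrow> 'g \<Rightarrow> 'k::comm_ring_1" and f :: "'i \<Rightarrow> 'g"
  assumes bij: "bij_betw f A S" and finA: "finite A"
  shows "(\<Sum>q | q permutes A. of_int (sign q) * (\<Prod>i\<in>A. a (f i) (f (q i))))
       = (\<Sum>p | p permutes S. of_int (sign p) * (\<Prod>s\<in>S. a s (p s)))"
proof -
  define g where "g = inv_into A f"
  have fg: "\<And>x. x \<in> S \<Longrightarrow> f (g x) = x" and gf: "\<And>x. x \<in> A \<Longrightarrow> g (f x) = x"
    and gS: "\<And>x. x \<in> S \<Longrightarrow> g x \<in> A" and fA: "\<And>x. x \<in> A \<Longrightarrow> f x \<in> S"
    unfolding g_def
    by (fact bij_betw_inv_into_right[OF bij] bij_betw_inv_into_left[OF bij]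
        bij_betw_apply[OF bij_betw_inv_into[OF bij]] bij_betw_apply[OF bij])+
  have finS: "finite S" using bij finA bij_betw_finite by blast
  define J where "J q = (\<lambda>x. if x \<in> S then f (q (g x)) else x)" for q
  define I where "I p = (\<lambda>x. if x \<in> A then g (p (f x)) else x)" for p
  have J: "J q permutes S \<and> sign (J q) = sign q" if "q permutes A" for q
  proof -
    interpret permutes_bij_finite q A S f g "J q"
      by unfold_locales (use that bij gf finA in \<open>auto simp: J_def\<close>)
    show ?thesis using permutes_p' sign_p' by simp
  qed
  have I: "I p permutes A" if "p permutes S" for p
  proof -
    interpret permutes_bij_finite p S A g f "I p"
      by unfold_locales
        (use that bij finS fg in \<open>auto simp: I_def g_def intro: bij_betw_inv_into\<close>)
    show ?thesis using permutes_p' by simp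
  qed
  show ?thesis
  proof (rule sum.reindex_bij_witness[where j = J and i = I])
    fix q assume q: "q \<in> {q. q permutes A}"
    show "I (J q) = q"
      using q fA gf permutes_in_image[of q A] permutes_not_in[of q A]
      by (auto simp: I_def J_def)
    show "J q \<in> {p. p permutes S}" using J q by auto
    have "(\<Prod>s\<in>S. a s (J q s)) = (\<Prod>i\<in>A. a (f i) (J q (f i)))"
      using prod.reindex_bij_betw[OF bij, of "\<lambda>s. a s (J q s)"] by simp
    also have "\<dots> = (\<Prod>i\<in>A. a (f i) (f (q i)))"
      by (rule prod.cong) (use fA gf in \<open>auto simp: J_def\<close>)
    finally show "of_int (sign (J q)) * (\<Prod>s\<in>S. a s (J q s)) =
        of_int (sign q) * (\<Prod>i\<in>A. a (f i) (f (q i)))"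
      using J q by simp
  next
    fix p assume p: "p \<in> {p. p permutes S}"
    show "J (I p) = p"
      using p gS fg permutes_in_image[of p S] permutes_not_in[of p S]
      by (auto simp: I_def J_def)
    show "I p \<in> {q. q permutes A}" using I p by auto
  qed
qed

lemma invertible_on_if_leibniz_det_unit:
  fixes a :: "'g \<Rightarrow> 'g \<Rightarrow> 'k::comm_ring_1"
  assumes finS: "finite S"
    and det: "(\<Sum>p | p permutes S. of_int (sign p) * (\<Prod>s\<in>S. a s (p s))) dvd 1"
  shows "invertible_on S a"
proof -
  define m where "m = card S"
  obtain f :: "nat \<Rightarrow> 'g" where bij: "bij_betw f {0..<m} S"
    using ex_bij_betw_nat_finite[OF finS] unfolding m_def by blast
  define g where "g = inv_into {0..<m} f"
  have fg: "\<And>x. x \<in> S \<Longrightarrow> f (g x) = x" and gf: "\<And>i. i < m \<Longrightarrow> g (f i) = i"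
    and gS: "\<And>x. x \<in> S \<Longrightarrow> g x < m"
    using bij_betw_inv_into_right[OF bij] bij_betw_inv_into_left[OF bij]
      bij_betw_apply[OF bij_betw_inv_into[OF bij]]
    unfolding g_def by auto
  define M where "M = mat m m (\<lambda>(i, j). a (f i) (f j))"
  have M: "M \<in> carrier_mat m m" unfolding M_def by simp
  have "det M = (\<Sum>q | q permutes {0..<m}. of_int (sign q) * (\<Prod>i=0..<m. a (f i) (f (q i))))"
    unfolding det_def M_def using permutes_in_image
    by (auto intro!: sum.cong arg_cong2[where f = "(*)"] prod.cong)
  also have "\<dots> = (\<Sum>p | p permutes S. of_int (sign p) * (\<Prod>s\<in>S. a s (p s)))"
    using leibniz_det_reindex[OF bij] by simp
  finally obtain d where d: "det M * d = 1" using det by (metis dvdE)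
  define Adj where "Adj = adj_mat M"
  have Adj: "Adj \<in> carrier_mat m m" and MA: "M * Adj = det M \<cdot>\<^sub>m 1\<^sub>m m"
    and AM: "Adj * M = det M \<cdot>\<^sub>m 1\<^sub>m m"
    using adj_mat[OF M] unfolding Adj_def by auto
  have prod_on_S: "(\<Sum>t\<in>S. X $$ (g s, g t) * Y $$ (g t, g u)) = (X * Y) $$ (g s, g u)"
    if "X \<in> carrier_mat m m" "Y \<in> carrier_mat m m" "s \<in> S" "u \<in> S" for X Y :: "'k mat" and s u
  proof -
    have "(\<Sum>t\<in>S. X $$ (g s, g t) * Y $$ (g t, g u)) = (\<Sum>j<m. X $$ (g s, j) * Y $$ (j, g u))"
      using sum.reindex_bij_betw[OF bij, of "\<lambda>t. X $$ (g s, g t) * Y $$ (g t, g u)"] gf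
      by (simp add: atLeast0LessThan)
    then show ?thesis using that gS by (simp add: scalar_prod_def atLeast0LessThan)
  qed
  have a_M: "a s t = M $$ (g s, g t)" if "s \<in> S" "t \<in> S" for s t
    using that gS fg by (simp add: M_def)
  have ginj: "g s = g u \<longleftrightarrow> s = u" if "s \<in> S" "u \<in> S" for s u using that fg by metis
  show ?thesis
    unfolding invertible_on_def
  proof (intro exI[of _ "\<lambda>t u. d * Adj $$ (g t, g u)"] conjI ballI)
    fix s u assume su: "s \<in> S" "u \<in> S"
    have "(\<Sum>t\<in>S. a s t * (d * Adj $$ (g t, g u)))
        = d * (\<Sum>t\<in>S. M $$ (g s, g t) * Adj $$ (g t, g u))"
      using su a_M by (simp add: sum_distrib_left mult.left_commute)
    then show "(\<Sum>t\<in>S. a s t * (d * Adj $$ (g t, g u))) = (if s = u then 1 else 0)"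
      using prod_on_S[OF M Adj su] su ginj gS d by (simp add: MA mult.commute)
    have "(\<Sum>t\<in>S. d * Adj $$ (g s, g t) * a t u)
        = d * (\<Sum>t\<in>S. Adj $$ (g s, g t) * M $$ (g t, g u))"
      using su a_M by (simp add: sum_distrib_left mult.assoc)
    then show "(\<Sum>t\<in>S. d * Adj $$ (g s, g t) * a t u) = (if s = u then 1 else 0)"
      using prod_on_S[OF Adj M su] su ginj gS d by (simp add: AM mult.commute)
  qed
qed

lemma pair_commute: "pair n v f = pair n f v"
  unfolding pair_def by (simp add: mult.commute)

lemma pair_sum_left: "pair n (\<lambda>i. \<Sum>s\<in>S. c s * x s i) f = (\<Sum>s\<in>S. c s * pair n (x s) f)"
  unfolding pair_def by (simp add: sum_distrib_left sum_distrib_right mult.assoc, rule sum.swap)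

lemma pair_add: "pair n (\<lambda>i. v i + w i) f = pair n v f + pair n w f"
  unfolding pair_def by (simp add: distrib_right sum.distrib)

lemma pair_diff: "pair n (\<lambda>i. v i - w i) f = pair n v f - pair n w f"
  unfolding pair_def by (simp add: left_diff_distrib sum_subtractf)

lemma pair_smult: "pair n (\<lambda>i. c * v i) f = c * pair n v f"
  unfolding pair_def by (simp add: sum_distrib_left mult.assoc)

lemma pair_zero: "pair n (\<lambda>i. 0) f = 0"
  unfolding pair_def by simp

lemma pair_unitv: "j < n \<Longrightarrow> pair n (unitv j) f = f j"
  unfolding pair_def unitv_def by (simp add: if_distrib[where f = "\<lambda>x. x * _"] cong: if_cong)

definition gram :: "nat \<Rightarrow> ('g \<Rightarrow> nat \<Rightarrow> 'k::comm_ring_1) \<Rightarrow> ('g \<Rightarrow> nat \<Rightarrow> 'k) \<Rightarrow> 'g \<Rightarrow> 'g \<Rightarrow> 'k" where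
  "gram n x y s t = pair n (x s) (y t)"

definition annihilator :: "nat \<Rightarrow> 'g set \<Rightarrow> ('g \<Rightarrow> nat \<Rightarrow> 'k::comm_ring_1) \<Rightarrow> (nat \<Rightarrow> 'k) set" where
  "annihilator n S y = {v. in_h n v \<and> (\<forall>s\<in>S. pair n v (y s) = 0)}"

lemma invertible_on_gram_swap:
  "invertible_on S (gram n x y) \<Longrightarrow> invertible_on S (gram n y x)"
proof -
  have "gram n y x = (\<lambda>s t. gram n x y t s)" by (simp add: fun_eq_iff gram_def pair_commute)
  then show "invertible_on S (gram n x y) \<Longrightarrow> invertible_on S (gram n y x)"
    using invertible_on_transpose[of S "gram n x y"] by simp
qed

lemma lin_indep_fam_if_gram_invertible:
  assumes "finite S" "invertible_on S (gram n x y)"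
  shows "lin_indep_fam S y"
  unfolding lin_indep_fam_def
proof (intro allI impI)
  fix c assume zero: "(\<lambda>i. \<Sum>t\<in>S. c t * y t i) = (\<lambda>i. 0)"
  have "(\<Sum>t\<in>S. gram n x y s t * c t) = pair n (\<lambda>i. \<Sum>t\<in>S. c t * y t i) (x s)" for s
    by (simp add: pair_sum_left gram_def pair_commute mult.commute)
  then have "\<forall>s\<in>S. (\<Sum>t\<in>S. gram n x y s t * c t) = 0"
    by (simp add: zero pair_zero)
  then show "\<forall>t\<in>S. c t = 0" by (rule invertible_on_kernel_trivial[OF assms])
qed

lemma submodule_h_annihilator: "submodule_h n (annihilator n S y)"
  unfolding submodule_h_def annihilator_def
  by (auto simp: in_h_def pair_add pair_smult pair_zero)

lemma direct_sum_span_annihilator: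
  assumes finS: "finite S" and inv: "invertible_on S (gram n y x)"
    and x_in_h: "\<forall>s\<in>S. in_h n (x s)"
  shows "direct_sum_h n (span_fam S x) (annihilator n S y)"
proof -
  have pair_comb: "pair n (\<lambda>i. \<Sum>s\<in>S. c s * x s i) (y u) = (\<Sum>s\<in>S. gram n y x u s * c s)"
    for c u by (simp add: pair_sum_left gram_def pair_commute mult.commute)
  have "span_fam S x \<inter> annihilator n S y \<subseteq> {\<lambda>i. 0}"
  proof
    fix v assume "v \<in> span_fam S x \<inter> annihilator n S y"
    then obtain c where v: "v = (\<lambda>i. \<Sum>s\<in>S. c s * x s i)"
      and ann: "\<forall>u\<in>S. pair n v (y u) = 0"
      unfolding span_fam_def annihilator_def by auto
    have "\<forall>u\<in>S. (\<Sum>s\<in>S. gram n y x u s * c s) = 0" using ann by (simp add: v pair_comb)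
    then have "\<forall>s\<in>S. c s = 0" by (rule invertible_on_kernel_trivial[OF finS inv])
    then show "v \<in> {\<lambda>i. 0}" by (simp add: v)
  qed
  moreover have "(\<lambda>i. 0) \<in> span_fam S x \<inter> annihilator n S y"
    unfolding span_fam_def annihilator_def
    by (auto simp: in_h_def pair_zero intro!: exI[of _ "\<lambda>s. 0"])
  moreover have "\<exists>x'\<in>span_fam S x. \<exists>t\<in>annihilator n S y. v = (\<lambda>i. x' i + t i)"
    if v: "in_h n v" for v
  proof -
    obtain c where c: "\<forall>u\<in>S. (\<Sum>s\<in>S. gram n y x u s * c s) = pair n v (y u)"
      using invertible_on_solvable[OF finS inv, of "\<lambda>u. pair n v (y u)"] by blast
    define x' where "x' = (\<lambda>i. \<Sum>s\<in>S. c s * x s i)"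
    have "x' \<in> span_fam S x" unfolding x'_def span_fam_def by auto
    moreover have "in_h n (\<lambda>i. v i - x' i)"
      using v x_in_h unfolding x'_def in_h_def by simp
    moreover have "pair n (\<lambda>i. v i - x' i) (y u) = 0" if "u \<in> S" for u
      using c that unfolding x'_def by (simp add: pair_diff pair_comb)
    ultimately show ?thesis
      unfolding annihilator_def by (intro bexI[of _ x'] bexI[of _ "\<lambda>i. v i - x' i"]) auto
  qed
  ultimately show ?thesis unfolding direct_sum_h_def by blast
qed

lemma generated_by_words_induct:
  assumes gen: "carrier G = {word_prod G w | w. set w \<subseteq> S}" and g: "g \<in> carrier G"
    and one: "P \<one>\<^bsub>G\<^esub>"
    and step: "\<And>s h. s \<in> S \<Longrightarrow> h \<in> carrier G \<Longrightarrow> P h \<Longrightarrow> P (s \<otimes>\<^bsub>G\<^esub> h)"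
  shows "P g"
proof -
  obtain w where w: "set w \<subseteq> S" and g_w: "g = word_prod G w" using g gen by blast
  have "P (word_prod G w)" using w
  proof (induction w)
    case Nil
    then show ?case using one by (simp add: word_prod_def)
  next
    case (Cons s w)
    have "word_prod G w \<in> carrier G" using Cons.prems gen by auto
    then show ?case using Cons step by (simp add: word_prod_def)
  qed
  then show ?thesis by (simp add: g_w)
qed

lemma realization_fixes_annihilator:
  assumes real: "realization G S n cor rt \<rho>" and SG: "S \<subseteq> carrier G"
    and gen: "carrier G = {word_prod G w | w. set w \<subseteq> S}"
    and g: "g \<in> carrier G" and v: "v \<in> annihilator n S rt"
  shows "\<rho> g v = v"
  using gen g
proof (rule generated_by_words_induct)
  have v_h: "in_h n v" and v_ker: "\<forall>s\<in>S. pair n v (rt s) = 0"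
    using v unfolding annihilator_def by auto
  have rep: "is_rep G n \<rho>" using real unfolding realization_def by blast
  show "\<rho> \<one>\<^bsub>G\<^esub> v = v" using rep v_h unfolding is_rep_def by blast
  fix s h assume s: "s \<in> S" and h: "h \<in> carrier G" and IH: "\<rho> h v = v"
  have "\<rho> (s \<otimes>\<^bsub>G\<^esub> h) v = \<rho> s v"
    using rep s SG h v_h IH unfolding is_rep_def by auto
  also have "\<dots> = refl_h n (cor s) (rt s) v" using real s v_h unfolding realization_def by blast
  also have "\<dots> = v" using v_ker s by (simp add: refl_h_def)
  finally show "\<rho> (s \<otimes>\<^bsub>G\<^esub> h) v = v" .
qed

lemma realization_preserves_pairing_with_annihilator:
  fixes \<rho> :: "'g \<Rightarrow> (nat \<Rightarrow> 'k::comm_ring_1) \<Rightarrow> (nat \<Rightarrow> 'k)"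
  assumes real: "realization G S n cor rt \<rho>" and SG: "S \<subseteq> carrier G"
    and gen: "carrier G = {word_prod G w | w. set w \<subseteq> S}"
    and g: "g \<in> carrier G" and f: "f \<in> annihilator n S cor"
  shows "\<forall>u. in_h n u \<longrightarrow> pair n (\<rho> g u) f = pair n u f"
  using gen g
proof (rule generated_by_words_induct)
  have f_ker: "\<forall>s\<in>S. pair n f (cor s) = 0" using f unfolding annihilator_def by auto
  have rep: "is_rep G n \<rho>" using real unfolding realization_def by blast
  show "\<forall>u. in_h n u \<longrightarrow> pair n (\<rho> \<one>\<^bsub>G\<^esub> u) f = pair n u f"
    using rep unfolding is_rep_def by auto
  fix s h assume s: "s \<in> S" and h: "h \<in> carrier G"
    and IH: "\<forall>u. in_h n u \<longrightarrow> pair n (\<rho> h u) f = pair n u f"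
  show "\<forall>u. in_h n u \<longrightarrow> pair n (\<rho> (s \<otimes>\<^bsub>G\<^esub> h) u) f = pair n u f"
  proof (intro allI impI)
    fix u :: "nat \<Rightarrow> 'k" assume u: "in_h n u"
    have hu: "in_h n (\<rho> h u)" using rep h u unfolding is_rep_def by blast
    have "pair n (\<rho> (s \<otimes>\<^bsub>G\<^esub> h) u) f = pair n (refl_h n (cor s) (rt s) (\<rho> h u)) f"
      using rep real s SG h u hu unfolding is_rep_def realization_def by auto
    also have "\<dots> = pair n (\<rho> h u) f"
      using f_ker s unfolding refl_h_def
      by (simp add: pair_diff pair_smult pair_commute[of n "cor s"])
    also have "\<dots> = pair n u f" using IH u by blast
    finally show "pair n (\<rho> (s \<otimes>\<^bsub>G\<^esub> h) u) f = pair n u f" .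
  qed
qed

lemma dual_act_fixes_if_pairing_preserved:
  fixes f :: "nat \<Rightarrow> 'k::comm_ring_1"
  assumes f: "in_h n f" and preserved: "\<forall>u. in_h n u \<longrightarrow> pair n (\<rho> (inv\<^bsub>G\<^esub> g) u) f = pair n u f"
  shows "dual_act G n \<rho> g f = f"
proof
  fix j
  show "dual_act G n \<rho> g f j = f j"
  proof (cases "j < n")
    case True
    have "in_h n (unitv j :: nat \<Rightarrow> 'k)" unfolding in_h_def unitv_def using True by auto
    then show ?thesis
      using True preserved pair_unitv[OF True] by (simp add: dual_act_def)
  next
    case False
    then show ?thesis using f by (simp add: dual_act_def in_h_def)
  qed
qed

lemma realization_dual_act_fixes_annihilator:
  assumes grp: "group G" and real: "realization G S n cor rt \<rho>" and SG: "S \<subseteq> carrier G"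
    and gen: "carrier G = {word_prod G w | w. set w \<subseteq> S}"
    and g: "g \<in> carrier G" and f: "f \<in> annihilator n S cor"
  shows "dual_act G n \<rho> g f = f"
proof (rule dual_act_fixes_if_pairing_preserved)
  show "in_h n f" using f by (simp add: annihilator_def)
  have "inv\<^bsub>G\<^esub> g \<in> carrier G" using grp g by (rule group.inv_closed)
  then show "\<forall>u. in_h n u \<longrightarrow> pair n (\<rho> (inv\<^bsub>G\<^esub> g) u) f = pair n u f"
    by (rule realization_preserves_pairing_with_annihilator[OF real SG gen _ f])
qed

theorem mainTheorem1:
  fixes G :: "('g, 'b) monoid_scheme" and S :: "'g set" and n :: nat
    and cor rt :: "'g \<Rightarrow> nat \<Rightarrow> 'k::comm_ring_1"
    and \<rho> :: "'g \<Rightarrow> (nat \<Rightarrow> 'k) \<Rightarrow> (nat \<Rightarrow> 'k)"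
  assumes cox: "coxeter_system G S"
    and finS: "finite S"
    and no2tors: "\<forall>x::'k. 2 * x = 0 \<longrightarrow> x = 0"
    and real: "realization G S n cor rt \<rho>"
    and det: "cartan_det S n cor rt dvd 1"
  shows "lin_indep_fam S rt \<and> lin_indep_fam S cor \<and>
    (\<exists>T. submodule_h n T \<and> direct_sum_h n (span_fam S cor) T \<and>
         (\<forall>v\<in>T. \<forall>s\<in>S. pair n v (rt s) = 0) \<and>
         (\<forall>w\<in>carrier G. \<forall>v\<in>T. \<rho> w v = v)) \<and>
    (\<exists>T'. submodule_h n T' \<and> direct_sum_h n (span_fam S rt) T' \<and>
         (\<forall>f\<in>T'. \<forall>s\<in>S. pair n (cor s) f = 0) \<and>
         (\<forall>w\<in>carrier G. \<forall>f\<in>T'. dual_act G n \<rho> w f = f))"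
proof -
  have grp: "group G" and SG: "S \<subseteq> carrier G"
    and gen: "carrier G = {word_prod G w | w. set w \<subseteq> S}"
    using cox unfolding coxeter_system_def by auto
  have in_h: "\<forall>s\<in>S. in_h n (cor s)" "\<forall>s\<in>S. in_h n (rt s)"
    using real unfolding realization_def by auto
  have inv: "invertible_on S (gram n cor rt)"
    using det by (intro invertible_on_if_leibniz_det_unit[OF finS]) (simp add: cartan_det_def gram_def)
  then have inv': "invertible_on S (gram n rt cor)" by (rule invertible_on_gram_swap)
  have "\<forall>w\<in>carrier G. \<forall>v\<in>annihilator n S rt. \<rho> w v = v"
    using realization_fixes_annihilator[OF real SG gen] by blast
  moreover have "\<forall>w\<in>carrier G. \<forall>f\<in>annihilator n S cor. dual_act G n \<rho> w f = f"
    using realization_dual_act_fixes_annihilator[OF grp real SG gen] by blast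
  moreover have "\<forall>v\<in>annihilator n S rt. \<forall>s\<in>S. pair n v (rt s) = 0"
    and "\<forall>f\<in>annihilator n S cor. \<forall>s\<in>S. pair n (cor s) f = 0"
    by (simp_all add: annihilator_def pair_commute)
  ultimately show ?thesis
    using lin_indep_fam_if_gram_invertible[OF finS inv] lin_indep_fam_if_gram_invertible[OF finS inv']
      direct_sum_span_annihilator[OF finS inv' in_h(1)] direct_sum_span_annihilator[OF finS inv in_h(2)]
      submodule_h_annihilator
    by blast
qed

end
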